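(* For all $m,n\ge 3$, the state complexity of the product (concatenation) $U_m(a,b,c)\,(U_n(a,b,c))^R$ is $(m-1)2^n+2^{n-1}-(m-1)$.
   Context: The state complexity of a regular language is the number of states of its minimal complete DFA. For $n\ge 3$, $\mathcal{U}_n(a,b,c)$ is the DFA over $\{a,b,c\}$ with states $\{0,\dots,n-1\}$, initial state $0$, final states $\{n-1\}$, where $a$ maps $i\mapsto i+1\pmod n$, $b$ swaps $0$ and $1$ fixing other states, and $c$ maps $n-1$ to $0$ fixing other states; $U_n(a,b,c)$ is its language. $L^R$ is the reversal of $L$, and $KL=\{uv: u\in K, v\in L\}$. *)

theory Defs
  imports Main
begin

datatype sym = a | b | c

definition is_dfa :: "nat set \<Rightarrow> nat \<Rightarrow> (nat \<Rightarrow> sym \<Rightarrow> nat) \<Rightarrow> nat set \<Rightarrow> bool" where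
  "is_dfa Q q0 delta F \<longleftrightarrow> finite Q \<and> q0 \<in> Q \<and> (\<forall>q\<in>Q. \<forall>x. delta q x \<in> Q) \<and> F \<subseteq> Q"

definition dfa_lang :: "nat \<Rightarrow> (nat \<Rightarrow> sym \<Rightarrow> nat) \<Rightarrow> nat set \<Rightarrow> sym list set" where
  "dfa_lang q0 delta F = {w. foldl delta q0 w \<in> F}"

definition state_complexity :: "sym list set \<Rightarrow> nat" where
  "state_complexity L = (LEAST k. \<exists>Q q0 delta F. is_dfa Q q0 delta F \<and> card Q = k \<and> dfa_lang q0 delta F = L)"

definition conc :: "sym list set \<Rightarrow> sym list set \<Rightarrow> sym list set" where
  "conc K L = {u @ v | u v. u \<in> K \<and> v \<in> L}"

definition reversal :: "sym list set \<Rightarrow> sym list set" where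
  "reversal L = rev ` L"

fun U_delta :: "nat \<Rightarrow> nat \<Rightarrow> sym \<Rightarrow> nat" where
  "U_delta n i a = (i + 1) mod n"
| "U_delta n i b = (if i = 0 then 1 else if i = 1 then 0 else i)"
| "U_delta n i c = (if i = n - 1 then 0 else i)"

definition U_dfa_states :: "nat \<Rightarrow> nat set" where
  "U_dfa_states n = {0..<n}"

definition U_lang :: "nat \<Rightarrow> sym list set" where
  "U_lang n = dfa_lang 0 (U_delta n) {n - 1}"

end

theory Submission
  imports Defs
begin

(* The state complexity of  L = U_m (U_n)^R  is computed by exhibiting an automaton for L
   whose states are all reachable and pairwise distinguishable.

   1. A general principle: if a deterministic automaton over an arbitrary finite state set is
      reachable and its states are pairwise distinguishable, then the state complexity of its
      language is the number of its states (upper bound by renaming states to naturals,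
      lower bound by injecting the states into any DFA for the language).
   2. Inside the locale U_concat (m, n >= 3): the standard automaton for K (M^R) has states
      (q, S) where q is the state of U_m and S is the set of states of U_n from which the
      reversal of some suffix already read (after a prefix accepted by U_m) leads to n - 1;
      the input is accepted iff 0 \<in> S.  A state is valid if
      q = m - 1 implies n - 1 \<in> S; there are (m - 1) 2^n + 2^(n-1) of them.
   3. Every valid state is reachable, by explicit words built from the letters a, b, c.
   4. Two valid states are equivalent iff they are equal or both have S = {0..n-1} (these m
      states accept everything).  Merging the latter into one state yields an automaton with
      (m - 1) 2^n + 2^(n-1) - (m - 1) states meeting the hypotheses of step 1. *)

lemma foldl_closed:
  assumes "\<And>e x. e \<in> Xs \<Longrightarrow> d e x \<in> Xs" and "e \<in> Xs"
  shows "foldl d e w \<in> Xs"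
  using assms(2) by (induction w arbitrary: e) (auto intro: assms(1))

lemma dfa_of_finite_automaton:
  fixes d :: "'s \<Rightarrow> sym \<Rightarrow> 's"
  assumes fin: "finite Xs" and st: "st \<in> Xs" and cl: "\<And>e x. e \<in> Xs \<Longrightarrow> d e x \<in> Xs"
  shows "\<exists>Q q0 \<delta> F. is_dfa Q q0 \<delta> F \<and> card Q = card Xs \<and> dfa_lang q0 \<delta> F = {w. foldl d st w \<in> Acc}"
proof -
  obtain h where h: "bij_betw h {0..<card Xs} Xs" using ex_bij_betw_nat_finite[OF fin] by blast
  define g where "g = inv_into {0..<card Xs} h"
  have g: "bij_betw g Xs {0..<card Xs}" unfolding g_def by (rule bij_betw_inv_into[OF h])
  have hg: "y \<in> Xs \<Longrightarrow> h (g y) = y" for y unfolding g_def by (rule bij_betw_inv_into_right[OF h])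
  define \<delta> where "\<delta> i x = g (d (h i) x)" for i x
  have commute: "y \<in> Xs \<Longrightarrow> foldl \<delta> (g y) w = g (foldl d y w)" for y w
    by (induction w arbitrary: y) (auto simp: \<delta>_def hg cl)
  have gl: "y \<in> Xs \<Longrightarrow> g y < card Xs" for y using g by (auto simp: bij_betw_def)
  have hl: "i < card Xs \<Longrightarrow> h i \<in> Xs" for i using h by (auto simp: bij_betw_def)
  have "is_dfa {0..<card Xs} (g st) \<delta> (g ` (Acc \<inter> Xs))"
    unfolding is_dfa_def using st cl gl hl fin by (auto simp: \<delta>_def)
  moreover have "dfa_lang (g st) \<delta> (g ` (Acc \<inter> Xs)) = {w. foldl d st w \<in> Acc}"
  proof -
    have "inj_on g Xs" using g by (auto simp: bij_betw_def)
    then have "foldl \<delta> (g st) w \<in> g ` (Acc \<inter> Xs) \<longleftrightarrow> foldl d st w \<in> Acc" for w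
      using commute[OF st] foldl_closed[of Xs d, OF cl st] by (auto simp: inj_on_image_mem_iff)
    then show ?thesis by (auto simp: dfa_lang_def)
  qed
  ultimately show ?thesis by (intro exI[of _ "{0..<card Xs}"] exI[of _ "g st"] exI[of _ \<delta>] exI[of _ "g ` (Acc \<inter> Xs)"]) simp
qed

text \<open>Lower bound: the states of a reachable automaton with pairwise distinguishable states
  inject into the states of every DFA for the same language.\<close>
lemma card_le_dfa_of_reachable_distinguishable:
  fixes d :: "'s \<Rightarrow> sym \<Rightarrow> 's"
  assumes dfa: "is_dfa Q q0 \<delta> F" and lang: "dfa_lang q0 \<delta> F = {w. foldl d st w \<in> Acc}"
    and reach: "\<And>e. e \<in> Xs \<Longrightarrow> \<exists>w. foldl d st w = e"
    and dist: "\<And>e1 e2. e1 \<in> Xs \<Longrightarrow> e2 \<in> Xs \<Longrightarrow> e1 \<noteq> e2 \<Longrightarrow>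
                 \<exists>z. (foldl d e1 z \<in> Acc) \<noteq> (foldl d e2 z \<in> Acc)"
  shows "card Xs \<le> card Q"
proof -
  define word where "word e = (SOME w. foldl d st w = e)" for e
  have word: "e \<in> Xs \<Longrightarrow> foldl d st (word e) = e" for e
    unfolding word_def using reach by (rule someI_ex)
  define \<phi> where "\<phi> e = foldl \<delta> q0 (word e)" for e
  have "\<phi> ` Xs \<subseteq> Q"
    using dfa foldl_closed[of Q \<delta> q0] by (auto simp: \<phi>_def is_dfa_def)
  moreover have "inj_on \<phi> Xs"
  proof (rule inj_onI, rule ccontr)
    fix e1 e2 assume e1: "e1 \<in> Xs" and e2: "e2 \<in> Xs" and eq: "\<phi> e1 = \<phi> e2" and "e1 \<noteq> e2"
    then obtain z where z: "(foldl d e1 z \<in> Acc) \<noteq> (foldl d e2 z \<in> Acc)" using dist by blast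
    have "foldl \<delta> q0 (word e1 @ z) = foldl \<delta> q0 (word e2 @ z)" using eq by (simp add: \<phi>_def)
    then have "(word e1 @ z \<in> dfa_lang q0 \<delta> F) = (word e2 @ z \<in> dfa_lang q0 \<delta> F)"
      by (simp add: dfa_lang_def)
    then show False using z lang word[OF e1] word[OF e2] by simp
  qed
  moreover have "finite Q" using dfa by (simp add: is_dfa_def)
  ultimately show ?thesis by (simp add: card_inj_on_le)
qed

theorem state_complexity_of_minimal_automaton:
  fixes d :: "'s \<Rightarrow> sym \<Rightarrow> 's"
  assumes "finite Xs" and "st \<in> Xs" and "\<And>e x. e \<in> Xs \<Longrightarrow> d e x \<in> Xs"
    and "\<And>e. e \<in> Xs \<Longrightarrow> \<exists>w. foldl d st w = e"
    and "\<And>e1 e2. e1 \<in> Xs \<Longrightarrow> e2 \<in> Xs \<Longrightarrow> e1 \<noteq> e2 \<Longrightarrow>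
           \<exists>z. (foldl d e1 z \<in> Acc) \<noteq> (foldl d e2 z \<in> Acc)"
  shows "state_complexity {w. foldl d st w \<in> Acc} = card Xs"
  unfolding state_complexity_def
proof (rule Least_equality)
  show "\<exists>Q q0 \<delta> F. is_dfa Q q0 \<delta> F \<and> card Q = card Xs \<and> dfa_lang q0 \<delta> F = {w. foldl d st w \<in> Acc}"
    by (rule dfa_of_finite_automaton[OF assms(1-3)])
next
  fix k assume "\<exists>Q q0 \<delta> F. is_dfa Q q0 \<delta> F \<and> card Q = k \<and> dfa_lang q0 \<delta> F = {w. foldl d st w \<in> Acc}"
  then obtain Q q0 \<delta> F where dfa: "is_dfa Q q0 \<delta> F" and "card Q = k"
    and lang: "dfa_lang q0 \<delta> F = {w. foldl d st w \<in> Acc}" by blast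
  then show "card Xs \<le> k"
    using card_le_dfa_of_reachable_distinguishable[OF dfa lang assms(4,5)] by simp
qed

locale U_concat =
  fixes m n :: nat
  assumes m3: "3 \<le> m" and n3: "3 \<le> n"
begin

definition L :: "sym list set" where
  "L = conc (U_lang m) (reversal (U_lang n))"

lemma U_delta_less: "q < k \<Longrightarrow> 2 \<le> k \<Longrightarrow> U_delta k q x < k"
  by (cases x) auto

lemma delta_n_less: "p < n \<Longrightarrow> U_delta n p x < n"
  using n3 U_delta_less by auto

lemma delta_m_less: "q < m \<Longrightarrow> U_delta m q x < m"
  using m3 U_delta_less by auto

definition pre :: "sym \<Rightarrow> nat set \<Rightarrow> nat set" where
  "pre x S = {p. p < n \<and> U_delta n p x \<in> S}"

text \<open>The automaton for L: the first component runs U_m, the second one runs the subset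
  automaton of the reversal of U_n; whenever U_m enters its final state, the final state n - 1
  of U_n is added, since the reversed word may start there.\<close>
definition step :: "nat \<times> nat set \<Rightarrow> sym \<Rightarrow> nat \<times> nat set" where
  "step e x = (U_delta m (fst e) x,
               pre x (snd e) \<union> (if U_delta m (fst e) x = m - 1 then {n - 1} else {}))"

definition pending :: "sym list \<Rightarrow> nat set" where
  "pending w = {p. p < n \<and> (\<exists>u v. w = u @ v \<and> foldl (U_delta m) 0 u = m - 1
                                    \<and> foldl (U_delta n) p (rev v) = n - 1)}"

lemma pending_Nil: "pending [] = {}"
  using m3 by (auto simp: pending_def)

lemma pending_snoc:
  "pending (w @ [x]) =
     pre x (pending w) \<union> (if U_delta m (foldl (U_delta m) 0 w) x = m - 1 then {n - 1} else {})"
proof (intro set_eqI iffI)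
  fix p assume "p \<in> pending (w @ [x])"
  then obtain u v where p: "p < n" and wv: "w @ [x] = u @ v" and u: "foldl (U_delta m) 0 u = m - 1"
    and v: "foldl (U_delta n) p (rev v) = n - 1" by (auto simp: pending_def)
  show "p \<in> pre x (pending w) \<union> (if U_delta m (foldl (U_delta m) 0 w) x = m - 1 then {n - 1} else {})"
  proof (cases v rule: rev_cases)
    case Nil
    then show ?thesis using wv u v by auto
  next
    case (snoc v' y)
    with wv have "w = u @ v'" "y = x" by auto
    moreover have "foldl (U_delta n) (U_delta n p x) (rev v') = n - 1" using v snoc \<open>y = x\<close> by simp
    ultimately have "U_delta n p x \<in> pending w" using u delta_n_less[OF p] by (auto simp: pending_def)
    then show ?thesis using p by (auto simp: pre_def)
  qed
next
  fix p assume "p \<in> pre x (pending w) \<union> (if U_delta m (foldl (U_delta m) 0 w) x = m - 1 then {n - 1} else {})"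
  then consider "p < n" "U_delta n p x \<in> pending w"
    | "p = n - 1" "U_delta m (foldl (U_delta m) 0 w) x = m - 1"
    by (auto simp: pre_def split: if_splits)
  then show "p \<in> pending (w @ [x])"
  proof cases
    case 1
    then obtain u v where "w = u @ v" "foldl (U_delta m) 0 u = m - 1"
      "foldl (U_delta n) (U_delta n p x) (rev v) = n - 1" by (auto simp: pending_def)
    then show ?thesis using 1 unfolding pending_def
      by (intro CollectI conjI exI[of _ u] exI[of _ "v @ [x]"]) auto
  next
    case 2
    then show ?thesis using n3 unfolding pending_def
      by (intro CollectI conjI exI[of _ "w @ [x]"] exI[of _ "[]"]) auto
  qed
qed

lemma run_step: "foldl step (0, {}) w = (foldl (U_delta m) 0 w, pending w)"
proof (induction w rule: rev_induct)
  case Nil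
  then show ?case by (simp add: pending_Nil)
next
  case (snoc x w)
  then show ?case by (simp add: step_def pending_snoc)
qed

lemma L_iff_pending: "w \<in> L \<longleftrightarrow> 0 \<in> pending w"
proof -
  have rev_image: "(v \<in> rev ` A) = (rev v \<in> A)" for v :: "sym list" and A
    by (metis image_iff rev_rev_ident)
  have "w \<in> L \<longleftrightarrow> (\<exists>u v. w = u @ v \<and> foldl (U_delta m) 0 u = m - 1 \<and> foldl (U_delta n) 0 (rev v) = n - 1)"
    unfolding L_def conc_def reversal_def U_lang_def dfa_lang_def by (auto simp: rev_image)
  then show ?thesis using n3 by (auto simp: pending_def)
qed

lemma L_accepts: "w \<in> L \<longleftrightarrow> 0 \<in> snd (foldl step (0, {}) w)"
  by (simp add: run_step L_iff_pending)

definition valid :: "nat \<times> nat set \<Rightarrow> bool" where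
  "valid e \<longleftrightarrow> fst e < m \<and> snd e \<subseteq> {..<n} \<and> (fst e = m - 1 \<longrightarrow> n - 1 \<in> snd e)"

lemma valid_step: "valid e \<Longrightarrow> valid (step e x)"
  using delta_m_less delta_n_less n3 by (auto simp: valid_def step_def pre_def)

lemma valid_init: "valid (0, {})"
  using m3 by (auto simp: valid_def)

text \<open>A state whose second component is full accepts every word, whatever its first component;
  such states are merged into the single state (0, {..<n}).\<close>
definition merge_full :: "nat \<times> nat set \<Rightarrow> nat \<times> nat set" where
  "merge_full e = (if snd e = {..<n} then (0, {..<n}) else e)"

definition step_X :: "nat \<times> nat set \<Rightarrow> sym \<Rightarrow> nat \<times> nat set" where
  "step_X e x = merge_full (step e x)"

definition Full_states :: "(nat \<times> nat set) set" where
  "Full_states = (\<lambda>q. (q, {..<n})) ` {..<m}"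

definition X :: "(nat \<times> nat set) set" where
  "X = ({e. valid e} - Full_states) \<union> {(0, {..<n})}"

lemma pre_full: "pre x {..<n} = {..<n}"
  using delta_n_less by (auto simp: pre_def)

lemma step_full: "step (q, {..<n}) x = (U_delta m q x, {..<n})"
  using n3 by (auto simp: step_def pre_full)

lemma merge_full_step: "merge_full (step (merge_full e) x) = merge_full (step e x)"
  by (cases e) (auto simp: merge_full_def step_full)

lemma snd_merge_full: "snd (merge_full e) = snd e"
  by (simp add: merge_full_def)

lemma run_step_X: "foldl step_X (merge_full e) z = merge_full (foldl step e z)"
  by (induction z arbitrary: e) (simp_all add: step_X_def merge_full_step)

lemma merge_full_in_X: "valid e \<Longrightarrow> merge_full e \<in> X"
  by (cases e) (auto simp: merge_full_def X_def Full_states_def)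

lemma X_valid: "e \<in> X \<Longrightarrow> valid e"
  using m3 n3 by (auto simp: X_def valid_def)

lemma merge_full_X: "e \<in> X \<Longrightarrow> merge_full e = e"
  by (cases e) (auto simp: X_def merge_full_def Full_states_def valid_def)

lemma X_full: "e \<in> X \<Longrightarrow> snd e = {..<n} \<Longrightarrow> e = (0, {..<n})"
  by (cases e) (auto simp: X_def Full_states_def valid_def)

lemma init_in_X: "(0, {}) \<in> X"
  using valid_init n3 by (auto simp: X_def Full_states_def)

lemma step_X_closed: "e \<in> X \<Longrightarrow> step_X e x \<in> X"
  unfolding step_X_def by (rule merge_full_in_X[OF valid_step[OF X_valid]])

lemma L_step_X: "L = {w. foldl step_X (0, {}) w \<in> {e. 0 \<in> snd e}}"
  using run_step_X[of "(0, {})"] merge_full_X[OF init_in_X] by (auto simp: L_accepts snd_merge_full)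

lemma card_valid_top: "card {S. S \<subseteq> {..<n} \<and> n - 1 \<in> S} = 2 ^ (n - 1)"
proof -
  have "{S. S \<subseteq> {..<n} \<and> n - 1 \<in> S} = insert (n - 1) ` Pow {..<n - 1}"
  proof (intro set_eqI iffI)
    fix S assume "S \<in> {S. S \<subseteq> {..<n} \<and> n - 1 \<in> S}"
    then have "S = insert (n - 1) (S - {n - 1})" "S - {n - 1} \<in> Pow {..<n - 1}" by auto
    then show "S \<in> insert (n - 1) ` Pow {..<n - 1}" by blast
  qed (use n3 in auto)
  moreover have "inj_on (insert (n - 1)) (Pow {..<n - 1})"
    unfolding inj_on_def by (metis Diff_insert_absorb PowD lessThan_iff less_irrefl subsetD)
  ultimately have "card {S. S \<subseteq> {..<n} \<and> n - 1 \<in> S} = card (Pow {..<n - 1})"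
    by (simp add: card_image)
  then show ?thesis by (simp add: card_Pow)
qed

lemma valid_set:
  "{e. valid e} = ({..<m - 1} \<times> Pow {..<n}) \<union> ({m - 1} \<times> {S. S \<subseteq> {..<n} \<and> n - 1 \<in> S})"
  using m3 by (auto simp: valid_def)

lemma card_valid: "card {e. valid e} = (m - 1) * 2 ^ n + 2 ^ (n - 1)"
proof -
  have "card {e. valid e} = card ({..<m - 1} \<times> Pow {..<n})
                          + card ({m - 1} \<times> {S. S \<subseteq> {..<n} \<and> n - 1 \<in> S})"
    unfolding valid_set by (rule card_Un_disjoint) auto
  then show ?thesis using card_valid_top by (simp add: card_cartesian_product card_Pow)
qed

lemma finite_X: "finite X"
  unfolding X_def valid_set by auto

lemma card_X: "card X = (m - 1) * 2 ^ n + 2 ^ (n - 1) - (m - 1)"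
proof -
  have sub: "Full_states \<subseteq> {e. valid e}" using m3 n3 by (auto simp: Full_states_def valid_def)
  have fin: "finite {e. valid e}" unfolding valid_set by auto
  have "card Full_states = m" unfolding Full_states_def by (simp add: card_image inj_on_def)
  moreover have "card X = card ({e. valid e} - Full_states) + 1"
    unfolding X_def using fin m3 by (subst card_Un_disjoint) (auto simp: Full_states_def)
  ultimately have "card X = (m - 1) * 2 ^ n + 2 ^ (n - 1) - m + 1"
    using card_Diff_subset[OF finite_subset[OF sub fin] sub] card_valid by simp
  moreover have "m \<le> (m - 1) * 2 ^ n + 2 ^ (n - 1)"
  proof -
    have "m - 1 \<le> (m - 1) * 2 ^ n" by simp
    moreover have "1 \<le> (2::nat) ^ (n - 1)" by simp
    ultimately show ?thesis by linarith
  qed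
  ultimately show ?thesis using m3 by linarith
qed


definition equivalent :: "nat \<times> nat set \<Rightarrow> nat \<times> nat set \<Rightarrow> bool" where
  "equivalent e1 e2 \<longleftrightarrow> (\<forall>z. (0 \<in> snd (foldl step e1 z)) = (0 \<in> snd (foldl step e2 z)))"

lemma equivalent_step: "equivalent e1 e2 \<Longrightarrow> equivalent (step e1 x) (step e2 x)"
  unfolding equivalent_def by (metis foldl_Cons)

lemma equivalent_sym: "equivalent e1 e2 \<Longrightarrow> equivalent e2 e1"
  unfolding equivalent_def by metis

text \<open>The letter a rotates U_n, so a^j tests membership of j in the second component.\<close>
lemma mem_after_a_power:
  "t + j < n \<Longrightarrow> t \<in> snd (foldl step e (replicate j a)) \<longleftrightarrow> t + j \<in> snd e"
proof (induction j arbitrary: e)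
  case (Suc j)
  have "t \<in> snd (foldl step e (replicate (Suc j) a)) \<longleftrightarrow> t + j \<in> snd (step e a)"
    using Suc by simp
  also have "\<dots> \<longleftrightarrow> t + Suc j \<in> snd e"
    using Suc.prems by (auto simp: step_def pre_def)
  finally show ?case .
qed simp

lemma equivalent_snd:
  assumes "equivalent e1 e2" "snd e1 \<subseteq> {..<n}" "snd e2 \<subseteq> {..<n}"
  shows "snd e1 = snd e2"
proof (rule ccontr)
  assume "snd e1 \<noteq> snd e2"
  then obtain p where p: "p < n" "p \<in> snd e1 \<longleftrightarrow> p \<notin> snd e2" using assms(2,3) by blast
  then show False
    using assms(1) mem_after_a_power[of 0 p] unfolding equivalent_def by (metis add_0)
qed

text \<open>The remaining case: distinct first components x, y with a common non-full second
  component missing r.  Such a "confusable" configuration is shown to be impossible: applying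
  letters moves x, y, r in a controlled way until x = m - 1 and r = n - 1, contradicting
  validity.\<close>
definition confusable :: "nat \<Rightarrow> nat \<Rightarrow> nat \<Rightarrow> bool" where
  "confusable x y r \<longleftrightarrow>
     (\<exists>S. equivalent (x, S) (y, S) \<and> valid (x, S) \<and> valid (y, S) \<and> x \<noteq> y \<and> r < n \<and> r \<notin> S)"

lemma confusable_bounds: "confusable x y r \<Longrightarrow> x < m \<and> y < m \<and> x \<noteq> y \<and> r < n"
  by (auto simp: confusable_def valid_def)

lemma confusable_sym: "confusable x y r \<Longrightarrow> confusable y x r"
  unfolding confusable_def using equivalent_sym by blast

lemma not_confusable_top: "\<not> confusable (m - 1) y (n - 1)"
  by (auto simp: confusable_def valid_def)

lemma confusable_a:
  assumes "confusable x y r"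
  shows "confusable ((x + 1) mod m) ((y + 1) mod m) ((r + (n - 1)) mod n)"
proof -
  obtain S where S: "equivalent (x, S) (y, S)" "valid (x, S)" "valid (y, S)" "x \<noteq> y" "r < n" "r \<notin> S"
    using assms by (auto simp: confusable_def)
  define x' where "x' = (x + 1) mod m"
  define y' where "y' = (y + 1) mod m"
  have xy: "x < m" "y < m" using S by (auto simp: valid_def)
  have ne: "x' \<noteq> y'"
    using xy S(4) unfolding x'_def y'_def by (auto simp: mod_Suc split: if_splits)
  have tx: "step (x, S) a = (x', pre a S \<union> (if x' = m - 1 then {n - 1} else {}))"
    by (simp add: step_def x'_def)
  have ty: "step (y, S) a = (y', pre a S \<union> (if y' = m - 1 then {n - 1} else {}))"
    by (simp add: step_def y'_def)
  have E: "equivalent (step (x, S) a) (step (y, S) a)" by (rule equivalent_step[OF S(1)])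
  have "pre a S \<union> (if x' = m - 1 then {n - 1} else {}) = pre a S \<union> (if y' = m - 1 then {n - 1} else {})"
    using equivalent_snd[OF E] valid_step[OF S(2), of a] valid_step[OF S(3), of a] tx ty
    by (auto simp: valid_def)
  then have same: "step (x, S) a = (x', pre a S)" "step (y, S) a = (y', pre a S)"
    using ne tx ty by (auto split: if_splits)
  have r': "(r + (n - 1)) mod n \<notin> pre a S"
  proof -
    have "((r + (n - 1)) mod n + 1) mod n = (r + (n - 1) + 1) mod n" by (simp add: mod_Suc_eq)
    also have "r + (n - 1) + 1 = r + n" using n3 by simp
    also have "(r + n) mod n = r" using S(5) by simp
    finally show ?thesis using S(6) by (auto simp: pre_def)
  qed
  have "(r + (n - 1)) mod n < n" using n3 by simp
  then show ?thesis
    using E same valid_step[OF S(2), of a] valid_step[OF S(3), of a] ne r'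
    unfolding confusable_def x'_def[symmetric] y'_def[symmetric] by metis
qed

lemma confusable_c:
  assumes "confusable (m - 1) y r" "y \<noteq> 0"
  shows "confusable 0 y r"
proof -
  obtain S where S: "equivalent (m - 1, S) (y, S)" "valid (m - 1, S)" "valid (y, S)" "m - 1 \<noteq> y"
    "r < n" "r \<notin> S"
    using assms by (auto simp: confusable_def)
  have tx: "step (m - 1, S) c = (0, pre c S)" using m3 by (simp add: step_def)
  have ty: "step (y, S) c = (y, pre c S)" using S(4) by (simp add: step_def)
  have "r \<noteq> n - 1" using S(2,6) by (auto simp: valid_def)
  then have r': "r \<notin> pre c S" using S(6) by (simp add: pre_def)
  have "equivalent (0, pre c S) (y, pre c S)" using equivalent_step[OF S(1), of c] tx ty by simp
  moreover have "valid (0, pre c S)" "valid (y, pre c S)"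
    using valid_step[OF S(2), of c] valid_step[OF S(3), of c] tx ty by simp_all
  ultimately show ?thesis unfolding confusable_def using r' assms(2) S(5) by blast
qed

lemma confusable_a_power:
  "confusable x y r \<Longrightarrow> confusable ((x + k) mod m) ((y + k) mod m) ((r + k * (n - 1)) mod n)"
proof (induction k)
  case 0
  then show ?case using confusable_bounds[OF 0] by simp
next
  case (Suc k)
  have "((r + k * (n - 1)) mod n + (n - 1)) mod n = (r + k * (n - 1) + (n - 1)) mod n"
    by (simp add: mod_add_left_eq)
  also have "r + k * (n - 1) + (n - 1) = r + Suc k * (n - 1)" by simp
  finally have r: "((r + k * (n - 1)) mod n + (n - 1)) mod n = (r + Suc k * (n - 1)) mod n" .
  have "((x + k) mod m + 1) mod m = (x + Suc k) mod m" "((y + k) mod m + 1) mod m = (y + Suc k) mod m"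
    by (simp_all add: mod_Suc_eq)
  then show ?case using confusable_a[OF Suc.IH[OF Suc.prems]] r by simp
qed

lemma confusable_top:
  assumes "confusable x y r"
  shows "\<exists>y' r'. confusable (m - 1) y' r' \<and> 0 < y' \<and> y' < m - 1"
proof -
  have b: "x < m" "y < m" "x \<noteq> y" using confusable_bounds[OF assms] by auto
  define y1 where "y1 = (y + (m - 1 - x)) mod m"
  define r1 where "r1 = (r + (m - 1 - x) * (n - 1)) mod n"
  have "(x + (m - 1 - x)) mod m = m - 1" using b m3 by simp
  then have g1: "confusable (m - 1) y1 r1"
    using confusable_a_power[OF assms, of "m - 1 - x"] unfolding y1_def r1_def by simp
  then have "y1 < m" "y1 \<noteq> m - 1" using confusable_bounds by auto
  show ?thesis
  proof (cases "y1 = 0")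
    case False
    then show ?thesis using g1 \<open>y1 < m\<close> \<open>y1 \<noteq> m - 1\<close> by (intro exI conjI) auto
  next
    case True
    have "(m - 1 + (m - 1)) mod m = m - 2"
    proof -
      have "m - 1 + (m - 1) = (m - 2) + 1 * m" using m3 by simp
      then have "(m - 1 + (m - 1)) mod m = (m - 2) mod m" by (metis mod_mult_self1)
      then show ?thesis using m3 by simp
    qed
    moreover have "(0 + (m - 1)) mod m = m - 1" using m3 by simp
    ultimately have "confusable (m - 2) (m - 1) ((r1 + (m - 1) * (n - 1)) mod n)"
      using confusable_a_power[of "m - 1" 0 r1 "m - 1"] g1 True by simp
    then show ?thesis using m3 confusable_sym by (intro exI conjI) auto
  qed
qed

text \<open>Going once around U_m, using c to skip, moves r by m - 1 backwards while x, y return.\<close>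
lemma confusable_back:
  assumes "confusable (m - 1) y r" "0 < y" "y < m - 1"
  shows "confusable (m - 1) y ((r + (m - 1) * (n - 1)) mod n)"
proof -
  have g0: "confusable 0 y r" using confusable_c assms by auto
  define e where "e = m - 1 - y"
  have e: "e < m" "e \<noteq> 0" "e + y = m - 1" using assms m3 unfolding e_def by auto
  define r1 where "r1 = (r + e * (n - 1)) mod n"
  have "confusable ((0 + e) mod m) ((y + e) mod m) r1"
    unfolding r1_def by (rule confusable_a_power[OF g0])
  then have "confusable (m - 1) e r1" using e m3 confusable_sym by (simp add: add.commute)
  then have "confusable e 0 r1" using confusable_c e confusable_sym by auto
  from confusable_a_power[OF this, of y]
  have "confusable ((e + y) mod m) ((0 + y) mod m) ((r1 + y * (n - 1)) mod n)" .
  moreover have "(e + y) mod m = m - 1" "(0 + y) mod m = y" using e assms m3 by simp_all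
  moreover have "(r1 + y * (n - 1)) mod n = (r + (m - 1) * (n - 1)) mod n"
  proof -
    have "(r1 + y * (n - 1)) mod n = (r + e * (n - 1) + y * (n - 1)) mod n"
      unfolding r1_def by (simp add: mod_add_left_eq)
    also have "r + e * (n - 1) + y * (n - 1) = r + (m - 1) * (n - 1)"
      using e(3) by (metis add.assoc add_mult_distrib)
    finally show ?thesis .
  qed
  ultimately show ?thesis by simp
qed

text \<open>Modulo n, moving back by m - 1 and then by m (n - 1) full cycles of U_m is a step of +1.\<close>
lemma shift_one_mod: "(r + (m - 1) * (n - 1) + (n - 1) * m * (n - 1)) mod n = (r + 1) mod n"
proof -
  obtain M where M: "m = Suc M" using m3 by (cases m) auto
  obtain N where N: "n = Suc N" using n3 by (cases n) auto
  have "1 \<le> Suc M * N" using M N n3 by simp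
  then obtain P where P: "Suc M * N = Suc P" by (cases "Suc M * N") auto
  have h: "r + (m - 1) * (n - 1) + (n - 1) * m * (n - 1) = (r + 1) + n * P"
    using P unfolding M N by (simp add: algebra_simps)
  show ?thesis unfolding h by simp
qed

lemma confusable_succ:
  assumes "confusable (m - 1) y r" "0 < y" "y < m - 1"
  shows "confusable (m - 1) y ((r + 1) mod n)"
proof -
  define r2 where "r2 = (r + (m - 1) * (n - 1)) mod n"
  have "confusable (m - 1) y r2" unfolding r2_def by (rule confusable_back[OF assms])
  from confusable_a_power[OF this, of "(n - 1) * m"]
  have "confusable ((m - 1 + (n - 1) * m) mod m) ((y + (n - 1) * m) mod m)
          ((r2 + (n - 1) * m * (n - 1)) mod n)" .
  moreover have "(m - 1 + (n - 1) * m) mod m = m - 1"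
    using m3 by (metis mod_mult_self1 mod_less diff_less zero_less_one order_less_le_trans zero_less_numeral)
  moreover have "(y + (n - 1) * m) mod m = y" using assms m3 by simp
  moreover have "(r2 + (n - 1) * m * (n - 1)) mod n = (r + 1) mod n"
  proof -
    have "(r2 + (n - 1) * m * (n - 1)) mod n
          = (r + (m - 1) * (n - 1) + (n - 1) * m * (n - 1)) mod n"
      unfolding r2_def by (simp add: mod_add_left_eq)
    then show ?thesis using shift_one_mod by simp
  qed
  ultimately show ?thesis by simp
qed

lemma confusable_impossible: "\<not> confusable x y r"
proof
  assume "confusable x y r"
  then obtain y' r' where g: "confusable (m - 1) y' r'" "0 < y'" "y' < m - 1"
    using confusable_top by blast
  have "confusable (m - 1) y' ((r' + k) mod n)" for k
  proof (induction k)
    case 0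
    show ?case using g confusable_bounds[OF g(1)] by simp
  next
    case (Suc k)
    from confusable_succ[OF Suc g(2,3)] show ?case by (simp add: mod_Suc_eq)
  qed
  from this[of "n - 1 - r'"] show False
    using confusable_bounds[OF g(1)] not_confusable_top by simp
qed

lemma X_distinguishable:
  assumes e1: "e1 \<in> X" and e2: "e2 \<in> X" and ne: "e1 \<noteq> e2"
  shows "\<exists>z. (foldl step_X e1 z \<in> {e. 0 \<in> snd e}) \<noteq> (foldl step_X e2 z \<in> {e. 0 \<in> snd e})"
proof -
  have v: "valid e1" "valid e2" using e1 e2 X_valid by auto
  have "\<not> equivalent e1 e2"
  proof
    assume E: "equivalent e1 e2"
    then have S: "snd e1 = snd e2" using equivalent_snd v by (auto simp: valid_def)
    show False
    proof (cases "snd e1 = {..<n}")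
      case True
      then show False using X_full[OF e1] X_full[OF e2] S ne by simp
    next
      case False
      then obtain r where "r < n" "r \<notin> snd e1" using v(1) by (auto simp: valid_def)
      moreover have "fst e1 \<noteq> fst e2" using S ne by (metis prod.expand)
      ultimately have "confusable (fst e1) (fst e2) r"
        using E S v unfolding confusable_def by (metis prod.collapse)
      then show False using confusable_impossible by blast
    qed
  qed
  then show ?thesis
    using run_step_X[of e1] run_step_X[of e2] merge_full_X[OF e1] merge_full_X[OF e2]
    unfolding equivalent_def by (auto simp: snd_merge_full)
qed

definition reach :: "nat \<times> nat set \<Rightarrow> bool" where
  "reach e \<longleftrightarrow> (\<exists>w. foldl step (0, {}) w = e)"

lemma reach_init: "reach (0, {})"
  unfolding reach_def by (metis foldl_Nil)

lemma reach_step: "reach e \<Longrightarrow> reach (step e x)"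
  unfolding reach_def by (metis foldl_Cons foldl_Nil foldl_append)

lemma step_a_low: "q + 1 < m - 1 \<Longrightarrow> step (q, S) a = (q + 1, pre a S)"
  by (simp add: step_def)

lemma step_a_top: "step (m - 2, S) a = (m - 1, pre a S \<union> {n - 1})"
  using m3 by (simp add: step_def Suc_diff_Suc numeral_2_eq_2)

lemma step_a_wrap: "step (m - 1, S) a = (0, pre a S)"
  using m3 by (simp add: step_def)

lemma step_b_top: "step (m - 1, S) b = (m - 1, pre b S \<union> {n - 1})"
  using m3 by (simp add: step_def)

lemma step_c_top: "step (m - 1, S) c = (0, pre c S)"
  using m3 by (simp add: step_def)

lemma step_c_low: "q \<noteq> m - 1 \<Longrightarrow> step (q, S) c = (q, pre c S)"
  by (simp add: step_def)

text \<open>The words ab and acb lead from U_m-state 0 back to 0 (as m \<ge> 3) and act on the second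
  component by the following maps.  Both rotate the cycle 0, 2, 3, ..., n - 1 of U_n and fix 1;
  they differ only in the new content of n - 1, which is copied from 0 resp. from 1.\<close>
definition rot_ab :: "nat set \<Rightarrow> nat set" where "rot_ab U = pre b (pre a U)"
definition rot_acb :: "nat set \<Rightarrow> nat set" where "rot_acb U = pre b (pre c (pre a U))"

lemma reach_rot_ab: "reach (0, U) \<Longrightarrow> reach (0, rot_ab U)"
proof -
  assume r: "reach (0, U)"
  have "reach (1, pre a U)" using reach_step[OF r, of a] step_a_low[of 0 U] m3 by simp
  from reach_step[OF this, of b] show ?thesis using m3 by (simp add: step_def rot_ab_def)
qed

lemma reach_rot_acb: "reach (0, U) \<Longrightarrow> reach (0, rot_acb U)"
proof -
  assume r: "reach (0, U)"
  have "reach (1, pre a U)" using reach_step[OF r, of a] step_a_low[of 0 U] m3 by simp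
  from reach_step[OF this, of c] have "reach (1, pre c (pre a U))" using step_c_low[of 1] m3 by simp
  from reach_step[OF this, of b] show ?thesis using m3 by (simp add: step_def rot_acb_def)
qed

lemma rot_ab_mem:
  "p < n \<Longrightarrow> p \<in> rot_ab U \<longleftrightarrow> (if p = 1 then 1 \<in> U else if p = n - 1 then 0 \<in> U
                                   else if p = 0 then 2 \<in> U else Suc p \<in> U)"
  using n3 by (auto simp: rot_ab_def pre_def numeral_2_eq_2)

lemma rot_acb_mem:
  "p < n \<Longrightarrow> p \<in> rot_acb U \<longleftrightarrow> (if p = 1 then 1 \<in> U else if p = n - 1 then 1 \<in> U
                                    else if p = 0 then 2 \<in> U else Suc p \<in> U)"
  using n3 by (auto simp: rot_acb_def pre_def numeral_2_eq_2)

lemma rot_ab_sub: "rot_ab U \<subseteq> {..<n}" by (auto simp: rot_ab_def pre_def)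
lemma rot_acb_sub: "rot_acb U \<subseteq> {..<n}" by (auto simp: rot_acb_def pre_def)

text \<open>The cycle 0, 2, 3, ..., n - 1 enumerated as cyc 0, ..., cyc (n - 2), and its inverse.\<close>
definition cyc :: "nat \<Rightarrow> nat" where "cyc t = (if t = 0 then 0 else Suc t)"
definition cyc_index :: "nat \<Rightarrow> nat" where "cyc_index p = (if p = 0 then 0 else p - 1)"

lemma cyc_cyc_index: "p \<noteq> 1 \<Longrightarrow> cyc (cyc_index p) = p"
  by (auto simp: cyc_def cyc_index_def)

lemma cyc_index_less: "p < n \<Longrightarrow> p \<noteq> 1 \<Longrightarrow> cyc_index p < n - 1"
  using n3 by (auto simp: cyc_index_def)

lemma cyc_props: "t < n - 1 \<Longrightarrow> cyc t < n \<and> cyc t \<noteq> 1"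
  by (auto simp: cyc_def)

text \<open>Turning U into V by rotating along the cycle: after t rotations, cycle position i holds
  the bit of U at position i + t, or of V at position i + t - (n - 1) once U is used up;
  position 1 keeps the bit of U.\<close>
definition interpolate :: "nat set \<Rightarrow> nat set \<Rightarrow> nat \<Rightarrow> nat set" where
  "interpolate U V t =
     {p. p < n \<and> (if p = 1 then 1 \<in> U
                  else if cyc_index p + t < n - 1 then cyc (cyc_index p + t) \<in> U
                  else cyc (cyc_index p + t - (n - 1)) \<in> V)}"

lemma interpolate_0: "U \<subseteq> {..<n} \<Longrightarrow> interpolate U V 0 = U"
  using cyc_index_less cyc_cyc_index n3 by (auto simp: interpolate_def)

lemma interpolate_last:
  "V \<subseteq> {..<n} \<Longrightarrow> (1 \<in> U \<longleftrightarrow> 1 \<in> V) \<Longrightarrow> interpolate U V (n - 1) = V"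
  using cyc_cyc_index n3 by (auto simp: interpolate_def)

lemma interpolate_Suc_mem:
  assumes t: "t < n - 1" and p: "p < n"
  shows "p \<in> interpolate U V (Suc t) \<longleftrightarrow>
           (if p = 1 then 1 \<in> interpolate U V t else if p = n - 1 then cyc t \<in> V
            else if p = 0 then 2 \<in> interpolate U V t else Suc p \<in> interpolate U V t)"
proof -
  consider "p = 1" | "p = n - 1" | "p = 0" | "2 \<le> p" "p < n - 1" using p n3 by linarith
  then show ?thesis
  proof cases
    case 1
    then show ?thesis using n3 by (simp add: interpolate_def)
  next
    case 2
    have "p \<noteq> 1" using 2 n3 by simp
    have idx: "cyc_index p = n - 2" using 2 n3 by (simp add: cyc_index_def)
    have wrap: "\<not> n - 2 + Suc t < n - 1" "n - 2 + Suc t - (n - 1) = t" using n3 by simp_all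
    have "p \<in> interpolate U V (Suc t) \<longleftrightarrow>
            (if cyc_index p + Suc t < n - 1 then cyc (cyc_index p + Suc t) \<in> U
             else cyc (cyc_index p + Suc t - (n - 1)) \<in> V)"
      unfolding interpolate_def using p \<open>p \<noteq> 1\<close> by simp
    also have "\<dots> \<longleftrightarrow> cyc t \<in> V" unfolding idx if_not_P[OF wrap(1)] wrap(2) by (rule refl)
    finally show ?thesis using 2 \<open>p \<noteq> 1\<close> by auto
  next
    case 3
    then show ?thesis using n3 by (simp add: interpolate_def cyc_index_def)
  next
    case 4
    then show ?thesis using n3 by (auto simp: interpolate_def cyc_index_def)
  qed
qed

text \<open>So the step is performed by ab when the new bit equals the bit shifted out of position 0,
  and by acb when it equals the bit at position 1.\<close>
lemma interpolate_step:
  assumes t: "t < n - 1"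
    and cond: "(cyc t \<in> U) \<noteq> (cyc t \<in> V) \<Longrightarrow> (cyc t \<in> V \<longleftrightarrow> 1 \<in> U)"
  shows "interpolate U V (Suc t) =
           (if cyc t \<in> U \<longleftrightarrow> cyc t \<in> V then rot_ab (interpolate U V t) else rot_acb (interpolate U V t))"
proof (rule set_eqI)
  fix p
  have m1: "1 \<in> interpolate U V t \<longleftrightarrow> 1 \<in> U" using n3 by (simp add: interpolate_def)
  have m0: "0 \<in> interpolate U V t \<longleftrightarrow> cyc t \<in> U" using n3 t by (simp add: interpolate_def cyc_index_def)
  show "p \<in> interpolate U V (Suc t) \<longleftrightarrow>
          p \<in> (if cyc t \<in> U \<longleftrightarrow> cyc t \<in> V then rot_ab (interpolate U V t) else rot_acb (interpolate U V t))"
  proof (cases "p < n")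
    case True
    then show ?thesis
      using interpolate_Suc_mem[OF t True] m0 m1 cond n3 by (auto simp: rot_ab_mem rot_acb_mem)
  qed (use rot_ab_sub rot_acb_sub in \<open>auto simp: interpolate_def\<close>)
qed

lemma reach_interpolate:
  assumes r: "reach (0, U)" and U: "U \<subseteq> {..<n}" and V: "V \<subseteq> {..<n}" and one: "1 \<in> U \<longleftrightarrow> 1 \<in> V"
    and cond: "\<And>t. t < n - 1 \<Longrightarrow> (cyc t \<in> U) \<noteq> (cyc t \<in> V) \<Longrightarrow> (cyc t \<in> V \<longleftrightarrow> 1 \<in> U)"
  shows "reach (0, V)"
proof -
  have "t \<le> n - 1 \<Longrightarrow> reach (0, interpolate U V t)" for t
  proof (induction t)
    case 0
    then show ?case using r interpolate_0[OF U] by simp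
  next
    case (Suc t)
    then have t: "t < n - 1" by simp
    have "reach (0, interpolate U V t)" using Suc by simp
    then show ?case using interpolate_step[OF t cond[OF t]] reach_rot_ab reach_rot_acb by auto
  qed
  then show ?thesis using interpolate_last[OF V one] by (metis order_refl)
qed

text \<open>Rotating forward along a: rot S is the set whose a-preimage is S.\<close>
definition rot :: "nat set \<Rightarrow> nat set" where
  "rot S = {p. p < n \<and> (p + (n - 1)) mod n \<in> S}"

lemma mod_succ_pred: "p < n \<Longrightarrow> ((p + 1) mod n + (n - 1)) mod n = p"
proof -
  assume p: "p < n"
  have "((p + 1) mod n + (n - 1)) mod n = (p + 1 + (n - 1)) mod n" by (simp add: mod_add_left_eq)
  also have "p + 1 + (n - 1) = p + n" using n3 by simp
  finally show ?thesis using p by simp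
qed

lemma mod_pred_succ: "p < n \<Longrightarrow> ((p + (n - 1)) mod n + 1) mod n = p"
proof -
  assume p: "p < n"
  have "((p + (n - 1)) mod n + 1) mod n = (p + (n - 1) + 1) mod n" by (simp add: mod_Suc_eq)
  also have "p + (n - 1) + 1 = p + n" using n3 by simp
  finally show ?thesis using p by simp
qed

lemma pre_a_eq: "pre a S = {p. p < n \<and> (p + 1) mod n \<in> S}"
  by (simp add: pre_def)

lemma pre_rot: "S \<subseteq> {..<n} \<Longrightarrow> pre a (rot S) = S"
  using mod_succ_pred by (auto simp: pre_a_eq rot_def)

lemma rot_sub: "rot S \<subseteq> {..<n}"
  by (auto simp: rot_def)

lemma rot_power_sub: "S \<subseteq> {..<n} \<Longrightarrow> (rot ^^ k) S \<subseteq> {..<n}"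
  by (induction k) (auto simp: rot_def)

lemma rot_single: "x < n \<Longrightarrow> rot {x} = {(x + 1) mod n}"
  using mod_pred_succ mod_succ_pred n3 by (auto simp: rot_def)

lemma rot_power_single: "x < n \<Longrightarrow> (rot ^^ k) {x} = {(x + k) mod n}"
  by (induction k) (simp_all add: rot_single mod_Suc_eq)

lemma rot_power_co: "x < n \<Longrightarrow> (rot ^^ k) ({..<n} - {x}) = {..<n} - {(x + k) mod n}"
proof (induction k)
  case (Suc k)
  have "rot ({..<n} - T) = {..<n} - rot T" for T using n3 by (auto simp: rot_def)
  then show ?case using Suc by (simp add: rot_single mod_Suc_eq)
qed simp

lemma rot_power_empty: "(rot ^^ k) {} = {}"
  by (induction k) (auto simp: rot_def)

lemma reach_climb: "k \<le> m - 2 \<Longrightarrow> S \<subseteq> {..<n} \<Longrightarrow> reach (0, (rot ^^ k) S) \<Longrightarrow> reach (k, S)"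
proof (induction k arbitrary: S)
  case (Suc k)
  have "reach (0, (rot ^^ k) (rot S))" using Suc.prems(3) by (simp add: funpow_swap1)
  then have "reach (k, rot S)" using Suc.IH[of "rot S"] Suc.prems rot_sub by simp
  then show ?case
    using reach_step[of "(k, rot S)" a] step_a_low[of k "rot S"] pre_rot Suc.prems m3 by simp
qed simp

lemma reach_top: "reach (m - 2, rot S) \<Longrightarrow> S \<subseteq> {..<n} \<Longrightarrow> n - 1 \<in> S \<Longrightarrow> reach (m - 1, S)"
  using reach_step[of "(m - 2, rot S)" a] pre_rot insert_absorb by (fastforce simp: step_a_top)

lemma pre_a_single: "x < n \<Longrightarrow> pre a {x} = {(x + (n - 1)) mod n}"
  using mod_succ_pred mod_pred_succ n3 by (auto simp: pre_a_eq)

lemma pre_a_co: "pre a ({..<n} - T) = {..<n} - pre a T"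
  using n3 by (auto simp: pre_a_eq)

lemma pre_a_1: "pre a {1} = {0}"
  using pre_a_single[of 1] n3 by simp

lemma pre_a_2: "pre a {2} = {1}"
proof -
  have "2 + (n - 1) = 1 + n" using n3 by simp
  then have "(2 + (n - 1)) mod n = 1 mod n" by (metis mod_add_self2)
  then have "(2 + (n - 1)) mod n = 1" using n3 by simp
  then show ?thesis using pre_a_single[of 2] n3 by simp
qed

lemma pre_a_top: "pre a {n - 1} = {n - 2}"
proof -
  have "n - 1 + (n - 1) = (n - 2) + n" using n3 by simp
  then have "(n - 1 + (n - 1)) mod n = (n - 2) mod n" by (metis mod_add_self2)
  then have "(n - 1 + (n - 1)) mod n = n - 2" using n3 by simp
  then show ?thesis using pre_a_single[of "n - 1"] n3 by simp
qed

lemma reach_via_top: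
  "S \<subseteq> {..<n} \<Longrightarrow> reach (0, (rot ^^ (m - 2)) S) \<Longrightarrow> reach (m - 1, pre a S \<union> {n - 1})"
  using reach_climb[of "m - 2" S] reach_step[of "(m - 2, S)" a] by (simp add: step_a_top)

lemma reach_top_c: "reach (m - 1, S) \<Longrightarrow> reach (0, pre c S)"
  using reach_step[of "(m - 1, S)" c] unfolding step_c_top .

lemma reach_top_b: "reach (m - 1, S) \<Longrightarrow> reach (m - 1, pre b S \<union> {n - 1})"
  using reach_step[of "(m - 1, S)" b] unfolding step_b_top by simp

text \<open>The singletons {t}, t \<noteq> 1, are reached at U_m-state 0: first {n - 2} through the final
  state of U_m, then the others by rotating with ab.\<close>
lemma reach_n_minus_2: "reach (0, {n - 2})"
proof -
  have "reach (m - 1, {n - 1})"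
    using reach_via_top[of "{}"] reach_init rot_power_empty by (simp add: pre_def)
  from reach_step[OF this, of a] show ?thesis unfolding step_a_wrap pre_a_top .
qed

lemma rot_ab_eqI: "(\<And>p. p < n \<Longrightarrow> p \<in> rot_ab U \<longleftrightarrow> p \<in> T) \<Longrightarrow> T \<subseteq> {..<n} \<Longrightarrow> rot_ab U = T"
  using rot_ab_sub[of U] by blast

lemma rot_ab_single:
  "2 \<le> t \<Longrightarrow> Suc t \<le> n - 2 \<Longrightarrow> rot_ab {Suc t} = {t}"
  "rot_ab {2} = {0}" "rot_ab {0} = {n - 1}"
  using n3 by (auto intro!: rot_ab_eqI simp: rot_ab_mem split: if_splits)

lemma reach_single:
  assumes t: "t < n" "t \<noteq> 1" and n4: "4 \<le> n"
  shows "reach (0, {t})"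
proof -
  have down: "i \<le> n - 4 \<Longrightarrow> reach (0, {n - 2 - i})" for i
  proof (induction i)
    case 0
    then show ?case using reach_n_minus_2 by simp
  next
    case (Suc i)
    have "Suc (n - 2 - Suc i) = n - 2 - i" using Suc.prems n4 by simp
    then have "reach (0, {Suc (n - 2 - Suc i)})" using Suc by simp
    moreover have "rot_ab {Suc (n - 2 - Suc i)} = {n - 2 - Suc i}"
      using Suc.prems n4 by (intro rot_ab_single) auto
    ultimately show ?case using reach_rot_ab by metis
  qed
  have "n - 2 - (n - 4) = 2" using n4 by simp
  then have two: "reach (0, {2})" using down[of "n - 4"] by simp
  have zero: "reach (0, {0})" using reach_rot_ab[OF two] rot_ab_single(2) by simp
  consider "t = 0" | "t = n - 1" | "2 \<le> t" "t \<le> n - 2" using t by linarith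
  then show ?thesis
  proof cases
    case 1
    then show ?thesis using zero by simp
  next
    case 2
    then show ?thesis using reach_rot_ab[OF zero] rot_ab_single(3) by simp
  next
    case 3
    then have "n - 2 - (n - 2 - t) = t" by simp
    then show ?thesis using down[of "n - 2 - t"] 3 n4 by simp
  qed
qed

lemma mod_pred_eq_0: "m mod n = 1 \<Longrightarrow> (m - 1) mod n = 0"
proof -
  assume h: "m mod n = 1"
  have "m = Suc (m - 1)" using m3 by simp
  then have "Suc (m - 1) mod n = 1" using h by simp
  then show ?thesis by (auto simp: mod_Suc split: if_splits)
qed

text \<open>The two starting points of the interpolation: {1} and all states except 1.\<close>
lemma reach_one: "reach (0, {1})"
proof (cases "n = 3")
  case True
  then show ?thesis using reach_n_minus_2 by simp
next
  case False
  then have n4: "4 \<le> n" using n3 by simp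
  have pre_c: "pre c {1, n - 1} = {1}" using n3 by (auto simp: pre_def)
  show ?thesis
  proof (cases "m mod n = 1")
    case False
    have "2 + (m - 2) = m" using m3 by simp
    then have "(rot ^^ (m - 2)) {2} = {m mod n}" using rot_power_single[of 2 "m - 2"] n3 by simp
    then have "reach (m - 1, pre a {2} \<union> {n - 1})"
      using reach_via_top[of "{2}"] reach_single[OF _ False n4] n3 by simp
    then have "reach (m - 1, {1, n - 1})" by (simp add: pre_a_2 insert_commute)
    then show ?thesis using reach_top_c pre_c by fastforce
  next
    case True
    have "1 + (m - 2) = m - 1" using m3 by simp
    moreover have "(m - 1) mod n = 0" using mod_pred_eq_0[OF True] .
    ultimately have "(rot ^^ (m - 2)) {1} = {0}" using rot_power_single[of 1 "m - 2"] n3 by simp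
    then have "reach (m - 1, pre a {1} \<union> {n - 1})"
      using reach_via_top[of "{1}"] reach_single[of 0] n3 n4 by simp
    then have "reach (m - 1, {0, n - 1})" unfolding pre_a_1 by (simp add: insert_commute)
    then have "reach (m - 1, pre b {0, n - 1} \<union> {n - 1})" by (rule reach_top_b)
    moreover have "pre b {0, n - 1} \<union> {n - 1} = {1, n - 1}" using n3 by (auto simp: pre_def)
    ultimately show ?thesis using reach_top_c pre_c by fastforce
  qed
qed

lemma reach_with_one: "U \<subseteq> {..<n} \<Longrightarrow> 1 \<in> U \<Longrightarrow> reach (0, U)"
  by (rule reach_interpolate[OF reach_one]) (use n3 cyc_props in auto)

lemma reach_all_but_one: "reach (0, {..<n} - {1})"
proof -
  have pre_c: "pre c ({..<n} - {1}) = {..<n} - {1}" using n3 by (auto simp: pre_def)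
  show ?thesis
  proof (cases "m mod n = 1")
    case False
    have "2 + (m - 2) = m" using m3 by simp
    then have "(rot ^^ (m - 2)) ({..<n} - {2}) = {..<n} - {m mod n}"
      using rot_power_co[of 2 "m - 2"] n3 by simp
    then have "reach (m - 1, pre a ({..<n} - {2}) \<union> {n - 1})"
      using reach_via_top[of "{..<n} - {2}"] reach_with_one False n3 by auto
    moreover have "pre a ({..<n} - {2}) \<union> {n - 1} = {..<n} - {1}"
      using n3 by (auto simp: pre_a_co pre_a_2)
    ultimately show ?thesis using reach_top_c pre_c by fastforce
  next
    case True
    have "1 + (m - 2) = m - 1" using m3 by simp
    moreover have "(m - 1) mod n = 0" using mod_pred_eq_0[OF True] .
    ultimately have "(rot ^^ (m - 2)) ({..<n} - {1}) = {..<n} - {0}"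
      using rot_power_co[of 1 "m - 2"] n3 by simp
    then have "reach (m - 1, pre a ({..<n} - {1}) \<union> {n - 1})"
      using reach_via_top[of "{..<n} - {1}"] reach_with_one n3 by auto
    moreover have "pre a ({..<n} - {1}) \<union> {n - 1} = {..<n} - {0}"
      unfolding pre_a_co pre_a_1 using n3 by auto
    ultimately have "reach (m - 1, pre b ({..<n} - {0}) \<union> {n - 1})" using reach_top_b by simp
    moreover have "pre b ({..<n} - {0}) \<union> {n - 1} = {..<n} - {1}" using n3 by (auto simp: pre_def)
    ultimately show ?thesis using reach_top_c pre_c by fastforce
  qed
qed

lemma reach_zero:
  assumes U: "U \<subseteq> {..<n}"
  shows "reach (0, U)"
proof (cases "1 \<in> U")
  case True
  then show ?thesis using reach_with_one U by simp
next
  case False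
  show ?thesis
    by (rule reach_interpolate[OF reach_all_but_one]) (use n3 cyc_props U False in auto)
qed

text \<open>All valid states are reachable: climb from (0, rot^q S) with a, and for q = m - 1 enter
  the final state of U_m from m - 2.\<close>
lemma reach_valid: "valid e \<Longrightarrow> reach e"
proof (cases e)
  case (Pair q S)
  assume "valid e"
  then have q: "q < m" and S: "S \<subseteq> {..<n}" and top: "q = m - 1 \<Longrightarrow> n - 1 \<in> S"
    using Pair by (auto simp: valid_def)
  show ?thesis
  proof (cases "q = m - 1")
    case False
    then show ?thesis using reach_climb[of q S] q S reach_zero[OF rot_power_sub[OF S]] Pair by simp
  next
    case True
    have "reach (m - 2, rot S)"
      using reach_climb[of "m - 2" "rot S"] rot_sub reach_zero rot_power_sub by simp
    then show ?thesis using reach_top top True S Pair by simp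
  qed
qed

lemma X_reachable:
  assumes "e \<in> X"
  shows "\<exists>w. foldl step_X (0, {}) w = e"
proof -
  obtain w where "foldl step (0, {}) w = e"
    using reach_valid[OF X_valid[OF assms]] unfolding reach_def by blast
  then have "foldl step_X (0, {}) w = e"
    using run_step_X[of "(0, {})" w] merge_full_X[OF init_in_X] merge_full_X[OF assms] by simp
  then show ?thesis by blast
qed

lemma state_complexity_L: "state_complexity L = card X"
  unfolding L_step_X
  by (rule state_complexity_of_minimal_automaton[OF finite_X init_in_X step_X_closed X_reachable
        X_distinguishable])

end

theorem theorem4:
  fixes m n :: nat
  assumes "m \<ge> 3" and "n \<ge> 3"
  shows "state_complexity (conc (U_lang m) (reversal (U_lang n)))
           = (m - 1) * 2 ^ n + 2 ^ (n - 1) - (m - 1)"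
proof -
  interpret U_concat m n using assms by unfold_locales
  show ?thesis using state_complexity_L card_X by (simp add: L_def)
qed

end
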